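(* Let $P\in\mathcal{M}_1$. For every $X\in L^\infty(P)$ we have $\rho^P(X)\ge\widetilde\rho^P(X)=\widehat\rho^P(X)$, and consequently $C^P\subseteq\widehat C^P$.
   Context: $(\Omega,\mathcal{F})$ is a measurable space, $\mathcal{M}_1$ the set of probability measures on it, $\mathcal{X}$ the space of bounded $\mathcal{F}$-measurable real functions on $\Omega$ (bounded pointwise). For $P\in\mathcal{M}_1$, $L^\infty(P)=L^\infty(\Omega,\mathcal{F},P)$ and $\mathcal{P}^P=\{Q\in\mathcal{M}_1:Q\ll P\}$. Fix a penalty function $\alpha:\mathcal{M}_1\to\mathbb{R}\cup\{+\infty\}$ such that $\rho(X):=\sup_{Q\in\mathcal{M}_1}\{\mathbb{E}_Q[-X]-\alpha(Q)\}$ is real-valued for all $X\in\mathcal{X}$. For $X\in L^\infty(P)$ define $\rho^P(X)=\inf_{\{\widetilde X\in\mathcal{X}:P(\widetilde X=X)=1\}}\rho(\widetilde X)$, $\widehat\rho^P(X)=\sup_{Q\in\mathcal{P}^P}\{\mathbb{E}_Q[-X]-\alpha(Q)\}$, and $\widetilde\rho^P(X)=\sup_{Q\in\mathcal{M}_1}\inf_{\{\widetilde X\in\mathcal{X}:P(\widetilde X=X)=1\}}\{\mathbb{E}_Q[-\widetilde X]-\alpha(Q)\}$. Acceptance sets: $C^P=\{X\in L^\infty(P):\rho^P(X)\le0\}$, $\widehat C^P=\{X\in L^\infty(P):\widehat\rho^P(X)\le0\}$. *)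

theory Defs
  imports "HOL-Probability.Probability"
begin

text \<open>The measurable space (Omega, F) is represented by a measure M; only space M and sets M matter.\<close>

definition M1 :: "'a measure \<Rightarrow> 'a measure set" where
  "M1 M = {Q. prob_space Q \<and> sets Q = sets M}"

definition bdd_meas :: "'a measure \<Rightarrow> ('a \<Rightarrow> real) set" where
  "bdd_meas M = {X. X \<in> borel_measurable M \<and> (\<exists>C. \<forall>\<omega>\<in>space M. \<bar>X \<omega>\<bar> \<le> C)}"

text \<open>Representatives of elements of L-infinity(P): measurable, P-essentially bounded.\<close>
definition Linf :: "'a measure \<Rightarrow> ('a \<Rightarrow> real) set" where
  "Linf P = {X. X \<in> borel_measurable P \<and> (\<exists>C. AE \<omega> in P. \<bar>X \<omega>\<bar> \<le> C)}"

definition absc_set :: "'a measure \<Rightarrow> 'a measure \<Rightarrow> 'a measure set" where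
  "absc_set M P = {Q \<in> M1 M. absolutely_continuous P Q}"

definition rho :: "'a measure \<Rightarrow> ('a measure \<Rightarrow> ereal) \<Rightarrow> ('a \<Rightarrow> real) \<Rightarrow> ereal" where
  "rho M \<alpha> X = (SUP Q\<in>M1 M. ereal (integral\<^sup>L Q (\<lambda>\<omega>. - X \<omega>)) - \<alpha> Q)"

definition versions :: "'a measure \<Rightarrow> 'a measure \<Rightarrow> ('a \<Rightarrow> real) \<Rightarrow> ('a \<Rightarrow> real) set" where
  "versions M P X = {Y \<in> bdd_meas M. AE \<omega> in P. Y \<omega> = X \<omega>}"

definition rhoP :: "'a measure \<Rightarrow> ('a measure \<Rightarrow> ereal) \<Rightarrow> 'a measure \<Rightarrow> ('a \<Rightarrow> real) \<Rightarrow> ereal" where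
  "rhoP M \<alpha> P X = (INF Y\<in>versions M P X. rho M \<alpha> Y)"

definition rho_hat :: "'a measure \<Rightarrow> ('a measure \<Rightarrow> ereal) \<Rightarrow> 'a measure \<Rightarrow> ('a \<Rightarrow> real) \<Rightarrow> ereal" where
  "rho_hat M \<alpha> P X = (SUP Q\<in>absc_set M P. ereal (integral\<^sup>L Q (\<lambda>\<omega>. - X \<omega>)) - \<alpha> Q)"

definition rho_tilde :: "'a measure \<Rightarrow> ('a measure \<Rightarrow> ereal) \<Rightarrow> 'a measure \<Rightarrow> ('a \<Rightarrow> real) \<Rightarrow> ereal" where
  "rho_tilde M \<alpha> P X = (SUP Q\<in>M1 M. INF Y\<in>versions M P X.
      ereal (integral\<^sup>L Q (\<lambda>\<omega>. - Y \<omega>)) - \<alpha> Q)"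

definition accP :: "'a measure \<Rightarrow> ('a measure \<Rightarrow> ereal) \<Rightarrow> 'a measure \<Rightarrow> ('a \<Rightarrow> real) set" where
  "accP M \<alpha> P = {X \<in> Linf P. rhoP M \<alpha> P X \<le> 0}"

definition acc_hat :: "'a measure \<Rightarrow> ('a measure \<Rightarrow> ereal) \<Rightarrow> 'a measure \<Rightarrow> ('a \<Rightarrow> real) set" where
  "acc_hat M \<alpha> P = {X \<in> Linf P. rho_hat M \<alpha> P X \<le> 0}"

end

theory Submission
  imports Defs
begin

text \<open>
  The inequality between \<open>\<rho>\<^sup>P\<close> and \<open>\<rho>\<close>-tilde is the minimax inequality
  \<open>sup inf \<le> inf sup\<close>. For the equality, look at the inner infimum over the versions of \<open>X\<close>
  for a fixed \<open>Q\<close>. If \<open>Q \<lless> P\<close>, all versions have the same \<open>Q\<close>-expectation, so the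
  infimum is \<open>E\<^sub>Q[-X] - \<alpha>(Q)\<close>. Otherwise some \<open>P\<close>-null set \<open>A\<close> has \<open>Q(A) > 0\<close>, and
  adding \<open>t \<cdot> 1\<^sub>A\<close> to a version, with \<open>t \<rightarrow> \<infinity>\<close>, drives the infimum to \<open>-\<infinity>\<close>.
  Hence only measures in \<open>\<P>\<^sup>P\<close> contribute to \<open>\<rho>\<close>-tilde.
\<close>

lemma SUP_INF_le_INF_SUP:
  fixes f :: "'a \<Rightarrow> 'b \<Rightarrow> 'c::complete_lattice"
  shows "(SUP x\<in>A. INF y\<in>B. f x y) \<le> (INF y\<in>B. SUP x\<in>A. f x y)"
  by (intro SUP_least INF_greatest) (meson INF_lower SUP_upper order_trans)

lemma rho_tilde_le_rhoP: "rho_tilde M \<alpha> P X \<le> rhoP M \<alpha> P X"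
  unfolding rho_tilde_def rhoP_def rho_def by (rule SUP_INF_le_INF_SUP)

lemma versions_nonempty:
  assumes sets_P: "sets P = sets M" and X: "X \<in> Linf P"
  shows "versions M P X \<noteq> {}"
proof -
  from X obtain C where "X \<in> borel_measurable P" and C: "AE \<omega> in P. \<bar>X \<omega>\<bar> \<le> C"
    by (auto simp: Linf_def)
  then have "X \<in> borel_measurable M"
    using sets_P by (simp cong: measurable_cong_sets)
  define Y where "Y = (\<lambda>\<omega>. if \<bar>X \<omega>\<bar> \<le> C then X \<omega> else 0)"
  have "Y \<in> borel_measurable M"
    unfolding Y_def using \<open>X \<in> borel_measurable M\<close> by measurable
  moreover have "\<forall>\<omega>\<in>space M. \<bar>Y \<omega>\<bar> \<le> \<bar>C\<bar>"
    by (auto simp: Y_def)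
  moreover have "AE \<omega> in P. Y \<omega> = X \<omega>"
    using C by eventually_elim (auto simp: Y_def)
  ultimately have "Y \<in> versions M P X"
    by (auto simp: versions_def bdd_meas_def)
  then show ?thesis by blast
qed

lemma versions_add_null_indicator:
  assumes sets_P: "sets P = sets M" and Y: "Y \<in> versions M P X" and A: "A \<in> null_sets P"
  shows "(\<lambda>\<omega>. Y \<omega> + t * indicator A \<omega>) \<in> versions M P X"
proof -
  from Y obtain C where "Y \<in> borel_measurable M" and C: "\<forall>\<omega>\<in>space M. \<bar>Y \<omega>\<bar> \<le> C"
    and Y_ae: "AE \<omega> in P. Y \<omega> = X \<omega>"
    by (auto simp: versions_def bdd_meas_def)
  have "A \<in> sets M"
    using null_setsD2[OF A] sets_P by simp
  have "(\<lambda>\<omega>. Y \<omega> + t * indicator A \<omega>) \<in> borel_measurable M"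
    using \<open>Y \<in> borel_measurable M\<close> \<open>A \<in> sets M\<close> by measurable
  moreover have "\<forall>\<omega>\<in>space M. \<bar>Y \<omega> + t * indicator A \<omega>\<bar> \<le> C + \<bar>t\<bar>"
    using C by (auto simp: indicator_def intro: abs_triangle_ineq[THEN order_trans])
  moreover have "AE \<omega> in P. Y \<omega> + t * indicator A \<omega> = X \<omega>"
    using Y_ae AE_not_in[OF A] by eventually_elim simp
  ultimately show ?thesis
    by (auto simp: versions_def bdd_meas_def)
qed

lemma integrable_bdd_meas:
  assumes "finite_measure Q" and sets_Q: "sets Q = sets M" and Y: "Y \<in> bdd_meas M"
  shows "integrable Q Y"
proof -
  from Y obtain C where "Y \<in> borel_measurable M" and C: "\<forall>\<omega>\<in>space M. \<bar>Y \<omega>\<bar> \<le> C"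
    by (auto simp: bdd_meas_def)
  moreover have "space Q = space M"
    using sets_eq_imp_space_eq[OF sets_Q] .
  ultimately show ?thesis
    using sets_Q
    by (intro finite_measure.integrable_const_bound[OF \<open>finite_measure Q\<close>, where B = C])
       (auto cong: measurable_cong_sets)
qed

lemma INF_versions_absolutely_continuous:
  assumes sets_P: "sets P = sets M" and X: "X \<in> Linf P" and Q: "Q \<in> absc_set M P"
  shows "(INF Y\<in>versions M P X. ereal (integral\<^sup>L Q (\<lambda>\<omega>. - Y \<omega>)) - \<alpha> Q)
       = ereal (integral\<^sup>L Q (\<lambda>\<omega>. - X \<omega>)) - \<alpha> Q"
proof -
  have sets_Q: "sets Q = sets P" and ac: "absolutely_continuous P Q"
    using Q sets_P by (auto simp: absc_set_def M1_def)
  have "X \<in> borel_measurable Q"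
    using X sets_Q by (simp add: Linf_def cong: measurable_cong_sets)
  have "integral\<^sup>L Q Y = integral\<^sup>L Q X" if Y: "Y \<in> versions M P X" for Y
  proof (rule integral_cong_AE)
    show "Y \<in> borel_measurable Q"
      using Y sets_Q sets_P by (simp add: versions_def bdd_meas_def cong: measurable_cong_sets)
    show "AE \<omega> in Q. Y \<omega> = X \<omega>"
      using Y by (intro absolutely_continuous_AE[OF sets_Q ac]) (simp add: versions_def)
  qed fact
  then show ?thesis
    using versions_nonempty[OF sets_P X] by simp
qed

lemma INF_versions_not_absolutely_continuous:
  assumes alpha_Q: "\<alpha> Q \<noteq> -\<infinity>" and sets_P: "sets P = sets M" and X: "X \<in> Linf P"
    and Q: "Q \<in> M1 M" and not_ac: "\<not> absolutely_continuous P Q"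
  shows "(INF Y\<in>versions M P X. ereal (integral\<^sup>L Q (\<lambda>\<omega>. - Y \<omega>)) - \<alpha> Q) = -\<infinity>"
    (is "?inf = _")
proof -
  interpret Q: prob_space Q
    using Q by (simp add: M1_def)
  have sets_Q: "sets Q = sets M"
    using Q by (simp add: M1_def)
  obtain Y where Y: "Y \<in> versions M P X"
    using versions_nonempty[OF sets_P X] by blast
  show ?thesis
  proof (cases "\<alpha> Q")
    case PInf
    have "?inf \<le> ereal (integral\<^sup>L Q (\<lambda>\<omega>. - Y \<omega>)) - \<alpha> Q"
      using Y by (rule INF_lower)
    then show ?thesis using PInf by simp
  next
    case (real a)
    from not_ac obtain A where A: "A \<in> null_sets P" "A \<notin> null_sets Q"
      unfolding absolutely_continuous_def by blast
    have "A \<in> sets Q"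
      using null_setsD2[OF A(1)] sets_P sets_Q by simp
    then have "measure Q A > 0"
      using A(2) by (auto simp: Q.emeasure_eq_measure zero_less_measure_iff)
    define c where "c = integral\<^sup>L Q Y"
    have "integrable Q Y"
      using Y by (intro integrable_bdd_meas[OF Q.finite_measure_axioms sets_Q]) (simp add: versions_def)
    then have shifted: "?inf \<le> ereal (- c - t * measure Q A - a)" for t
      using INF_lower[OF versions_add_null_indicator[OF sets_P Y A(1), of t],
          of "\<lambda>Y. ereal (integral\<^sup>L Q (\<lambda>\<omega>. - Y \<omega>)) - \<alpha> Q"] \<open>A \<in> sets Q\<close> real
      by (simp add: c_def Q.emeasure_eq_measure)
    show ?thesis
    proof (rule ereal_bot)
      fix B
      show "?inf \<le> ereal B"
        using shifted[of "(- c - a - B) / measure Q A"] \<open>measure Q A > 0\<close> by simp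
    qed
  qed (use alpha_Q in simp)
qed

lemma rho_tilde_eq_rho_hat:
  assumes alpha_range: "\<forall>Q\<in>M1 M. \<alpha> Q \<noteq> -\<infinity>" and P: "P \<in> M1 M" and X: "X \<in> Linf P"
  shows "rho_tilde M \<alpha> P X = rho_hat M \<alpha> P X"
proof -
  let ?E = "\<lambda>Q. ereal (integral\<^sup>L Q (\<lambda>\<omega>. - X \<omega>)) - \<alpha> Q"
  let ?inf = "\<lambda>Q. INF Y\<in>versions M P X. ereal (integral\<^sup>L Q (\<lambda>\<omega>. - Y \<omega>)) - \<alpha> Q"
  have sets_P: "sets P = sets M"
    using P by (simp add: M1_def)
  have M1_split: "M1 M = absc_set M P \<union> (M1 M - absc_set M P)"
    by (auto simp: absc_set_def)
  have inf_absc: "?inf Q = ?E Q" if "Q \<in> absc_set M P" for Q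
    using INF_versions_absolutely_continuous[OF sets_P X that] .
  have inf_not_absc: "?inf Q = -\<infinity>" if "Q \<in> M1 M - absc_set M P" for Q
    using that alpha_range
    by (intro INF_versions_not_absolutely_continuous[OF _ sets_P X]) (auto simp: absc_set_def)
  have "rho_tilde M \<alpha> P X = (SUP Q\<in>absc_set M P. ?inf Q) \<squnion> (SUP Q\<in>M1 M - absc_set M P. ?inf Q)"
    unfolding rho_tilde_def by (subst M1_split) (rule SUP_union)
  also have "\<dots> = (SUP Q\<in>absc_set M P. ?E Q) \<squnion> (SUP Q\<in>M1 M - absc_set M P. -\<infinity>)"
    by (intro arg_cong2[where f = sup] SUP_cong[OF refl] inf_absc inf_not_absc)
  also have "\<dots> = (SUP Q\<in>absc_set M P. ?E Q)"
    by (rule sup_absorb1) (simp add: SUP_least)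
  finally show ?thesis
    by (simp only: rho_hat_def)
qed

theorem lemma3p5:
  fixes M :: "'a measure" and \<alpha> :: "'a measure \<Rightarrow> ereal" and P :: "'a measure"
  assumes alpha_range: "\<forall>Q\<in>M1 M. \<alpha> Q \<noteq> -\<infinity>"
    and rho_real: "\<forall>X\<in>bdd_meas M. \<bar>rho M \<alpha> X\<bar> \<noteq> \<infinity>"
    and P: "P \<in> M1 M"
  shows "(\<forall>X\<in>Linf P. rhoP M \<alpha> P X \<ge> rho_tilde M \<alpha> P X \<and>
                      rho_tilde M \<alpha> P X = rho_hat M \<alpha> P X)
         \<and> accP M \<alpha> P \<subseteq> acc_hat M \<alpha> P"
proof -
  have "rho_hat M \<alpha> P X \<le> rhoP M \<alpha> P X" if "X \<in> Linf P" for X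
    using rho_tilde_le_rhoP rho_tilde_eq_rho_hat[OF alpha_range P that] by metis
  then have "accP M \<alpha> P \<subseteq> acc_hat M \<alpha> P"
    unfolding accP_def acc_hat_def by (auto intro: order_trans)
  then show ?thesis
    using rho_tilde_le_rhoP rho_tilde_eq_rho_hat[OF alpha_range P] by blast
qed

end
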